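(* Let $r\ge1$ be an integer, let $a,\mu$ be real parameters and $\mathbf{n}=(n_1,\dots,n_r)\in\mathbb{N}_0^r$. Then for $(\xi_1,\dots,\xi_r)\in\mathbb{R}^r$, $$\mathcal{F}\big(f_r(x_1,\dots,x_r;n_1,\dots,n_r,a,\mu)\big)(\xi_1,\dots,\xi_r)=2^{2ra+\frac{r(r-5)}{4}+\sum_{j=1}^{r-1}jn_{j+1}}\prod_{j=1}^{r}\left\{\frac{\left(2\left(|\mathbf{n}^{j+1}|+\mu+\frac{r-j}{2}\right)\right)_{n_j}}{n_j!}\,\Theta_j^r(a,\mu,\mathbf{n};\xi_j)\right\},$$ where \begin{multline*} \Theta_j^r(a,\mu,\mathbf{n};\xi_j)=B\left(a+\frac{|\mathbf{n}^{j+1}|+i\xi_j}{2}+\frac{r-j}{4},\ a+\frac{|\mathbf{n}^{j+1}|-i\xi_j}{2}+\frac{r-j}{4}\right)\\ \times{}_3F_2\left(\begin{matrix}-n_j,\ n_j+2\left(|\mathbf{n}^{j+1}|+\mu+\frac{r-j}{2}\right),\ a+\frac{|\mathbf{n}^{j+1}|+i\xi_j}{2}+\frac{r-j}{4}\\ |\mathbf{n}^{j+1}|+\mu+\frac{r-j+1}{2},\ |\mathbf{n}^{j+1}|+2a+\frac{r-j}{2}\end{matrix}\;\Big|\;1\right). \end{multline*} Moreover, in terms of continuous Hahn polynomials, \begin{multline*} \Theta_j^r(a,\mu,\mathbf{n};\xi_j)=\frac{n_j!}{i^{n_j}\left(|\mathbf{n}^{j+1}|+\mu+\frac{r-j+1}{2}\right)_{n_j}\left(|\mathbf{n}^{j+1}|+2a+\frac{r-j}{2}\right)_{n_j}}\\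 \times B\left(a+\frac{|\mathbf{n}^{j+1}|+i\xi_j}{2}+\frac{r-j}{4},\ a+\frac{|\mathbf{n}^{j+1}|-i\xi_j}{2}+\frac{r-j}{4}\right)\\ \times p_{n_j}\Big(\frac{\xi_j}{2};\ a+\frac{|\mathbf{n}^{j+1}|}{2}+\frac{r-j}{4},\ \mu-a+\frac{|\mathbf{n}^{j+1}|+1}{2}+\frac{r-j}{4},\ \mu-a+\frac{|\mathbf{n}^{j+1}|+1}{2}+\frac{r-j}{4},\ a+\frac{|\mathbf{n}^{j+1}|}{2}+\frac{r-j}{4}\Big). \end{multline*}
   Context: Pochhammer symbol: $(\alpha)_0=1$, $(\alpha)_n=\alpha(\alpha+1)\cdots(\alpha+n-1)$. ${}_pF_q\left(\begin{matrix}a_1,\dots,a_p\\ b_1,\dots,b_q\end{matrix}\mid x\right)=\sum_{k\ge0}\frac{(a_1)_k\cdots(a_p)_k}{(b_1)_k\cdots(b_q)_k}\frac{x^k}{k!}$. Beta function $B(p,q)=\Gamma(p)\Gamma(q)/\Gamma(p+q)$. Gegenbauer polynomials: $C_n^{(\lambda)}(x)=\frac{(2\lambda)_n}{n!}\,{}_2F_1\left(\begin{matrix}-n,\ n+2\lambda\\ \lambda+\frac12\end{matrix}\mid\frac{1-x}{2}\right)$. Continuous Hahn polynomials: $p_n(x;a,b,c,d)=i^n\frac{(a+c)_n(a+d)_n}{n!}\,{}_3F_2\left(\begin{matrix}-n,\ n+a+b+c+d-1,\ a+ix\\ a+c,\ a+d\end{matrix}\mid1\right)$. Notation: for $\mathbf{n}=(n_1,\dots,n_r)$,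 $|\mathbf{n}^j|=n_j+\cdots+n_r$ for $1\le j\le r$, and $|\mathbf{n}^{r+1}|=0$. For $\boldsymbol{y}=(y_1,\dots,y_r)$, $\boldsymbol{y}_0=0$, $\boldsymbol{y}_j=(y_1,\dots,y_j)$, $\|\cdot\|$ the Euclidean norm. Ball polynomials: $P^{\mu}_{\mathbf{n}}(\boldsymbol{y})=\prod_{j=1}^{r}(1-\|\boldsymbol{y}_{j-1}\|^2)^{n_j/2}C^{(\lambda_j)}_{n_j}\big(y_j/\sqrt{1-\|\boldsymbol{y}_{j-1}\|^2}\big)$ with $\lambda_j=\mu+|\mathbf{n}^{j+1}|+\frac{r-j}{2}$. Define $f_r(x_1,\dots,x_r;n_1,\dots,n_r,a,\mu)=\prod_{j=1}^{r}(1-\tanh^2 x_j)^{a+\frac{r-j}{4}}\,P^{\mu}_{\mathbf{n}}(\upsilon_1,\dots,\upsilon_r)$, where $\upsilon_1=\tanh x_1$ and $\upsilon_j=\tanh x_j\sqrt{(1-\tanh^2x_1)\cdots(1-\tanh^2 x_{j-1})}$ for $j\ge2$. Fourier transform: $\mathcal{F}(f)(\xi_1,\dots,\xi_r)=\int_{\mathbb{R}^r}e^{-i(\xi_1x_1+\cdots+\xi_rx_r)}f(x_1,\dots,x_r)\,dx_1\cdots dx_r$. *)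

theory Defs
  imports "HOL-Analysis.Analysis"
begin

definition hypergeom :: "'a::{real_normed_field,banach} list \<Rightarrow> 'a list \<Rightarrow> 'a \<Rightarrow> 'a" where
  "hypergeom as bs x =
     (\<Sum>k. (prod_list (map (\<lambda>c. pochhammer c k) as) / prod_list (map (\<lambda>c. pochhammer c k) bs))
           * x ^ k / of_nat (fact k))"

definition gegenbauer :: "nat \<Rightarrow> real \<Rightarrow> real \<Rightarrow> real" where
  "gegenbauer n lam x =
     pochhammer (2 * lam) n / fact n
     * hypergeom [- real n, real n + 2 * lam] [lam + 1/2] ((1 - x) / 2)"

definition cont_hahn :: "nat \<Rightarrow> real \<Rightarrow> complex \<Rightarrow> complex \<Rightarrow> complex \<Rightarrow> complex \<Rightarrow> complex" where
  "cont_hahn n x a b c d =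
     \<i> ^ n * pochhammer (a + c) n * pochhammer (a + d) n / of_nat (fact n)
     * hypergeom [- of_nat n, of_nat n + a + b + c + d - 1, a + \<i> * of_real x] [a + c, a + d] 1"

text \<open>Tail sums |n^j| = n_j + ... + n_r (zero for j = r+1).\<close>
definition tailsum :: "nat \<Rightarrow> (nat \<Rightarrow> nat) \<Rightarrow> nat \<Rightarrow> nat" where
  "tailsum r n j = (\<Sum>k=j..r. n k)"

definition ball_poly :: "nat \<Rightarrow> real \<Rightarrow> (nat \<Rightarrow> nat) \<Rightarrow> (nat \<Rightarrow> real) \<Rightarrow> real" where
  "ball_poly r mu n y =
     (\<Prod>j=1..r.
        let s = 1 - (\<Sum>k=1..<j. (y k)^2);
            lam = mu + real (tailsum r n (j+1)) + (real r - real j) / 2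
        in s powr (real (n j) / 2) * gegenbauer (n j) lam (y j / sqrt s))"

definition upsilon :: "(nat \<Rightarrow> real) \<Rightarrow> nat \<Rightarrow> real" where
  "upsilon x j = tanh (x j) * sqrt (\<Prod>k=1..<j. 1 - (tanh (x k))^2)"

definition f_r :: "nat \<Rightarrow> (nat \<Rightarrow> nat) \<Rightarrow> real \<Rightarrow> real \<Rightarrow> (nat \<Rightarrow> real) \<Rightarrow> real" where
  "f_r r n a mu x =
     (\<Prod>j=1..r. (1 - (tanh (x j))^2) powr (a + (real r - real j) / 4))
     * ball_poly r mu n (upsilon x)"

definition fourier_integrand :: "nat \<Rightarrow> ((nat \<Rightarrow> real) \<Rightarrow> complex) \<Rightarrow> (nat \<Rightarrow> real) \<Rightarrow> (nat \<Rightarrow> real) \<Rightarrow> complex" where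
  "fourier_integrand r f xi x = exp (- \<i> * of_real (\<Sum>j=1..r. xi j * x j)) * f x"

definition fourier :: "nat \<Rightarrow> ((nat \<Rightarrow> real) \<Rightarrow> complex) \<Rightarrow> (nat \<Rightarrow> real) \<Rightarrow> complex" where
  "fourier r f xi = integral\<^sup>L (PiM {1..r} (\<lambda>_. lborel)) (fourier_integrand r f xi)"

definition Theta :: "nat \<Rightarrow> nat \<Rightarrow> real \<Rightarrow> real \<Rightarrow> (nat \<Rightarrow> nat) \<Rightarrow> real \<Rightarrow> complex" where
  "Theta r j a mu n xi =
     (let N = real (tailsum r n (j+1));
          q = (real r - real j);
          alpha = of_real a + (of_real N + \<i> * of_real xi) / 2 + of_real (q / 4);
          beta  = of_real a + (of_real N - \<i> * of_real xi) / 2 + of_real (q / 4)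
      in Beta alpha beta
         * hypergeom [- of_nat (n j), of_real (real (n j) + 2 * (N + mu + q / 2)), alpha]
                     [of_real (N + mu + (q + 1) / 2), of_real (N + 2 * a + q / 2)] 1)"

end

(*
  The Ball polynomial separates in the variables x_j: since 1 - |upsilon_{j-1}|^2 is the
  product of the 1 - tanh^2 x_k with k < j, f_r is a product of one-variable functions
  (1 - tanh^2 t)^b_j C_{n_j}^(lambda_j)(tanh t), and its Fourier transform is the product of
  their one-dimensional transforms.  Expanding C_{n_j} as a terminating 2F1 in
  (1 - tanh t)/2 = e^(-2t)/(1 + e^(-2t)) reduces each factor to the integrals
  int e^(-2st) (1 + e^(-2t))^(-c) dt = B(s, c - s)/2; the substitution y = e^(-2t) turns
  these into Beta integrals of the second kind, which Fubini obtains from a product of two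
  Gamma integrals.  Shifting the second Beta parameter by k produces the Pochhammer ratios
  that reassemble the terminating 3F2, and the continuous Hahn form is the same 3F2
  rewritten in Hahn parameters.
*)

theory Submission
  imports Defs
begin

lemma absolutely_integrable_on_imp_set_integrable_lborel:
  fixes f :: "'a::euclidean_space \<Rightarrow> 'b::euclidean_space"
  assumes f: "f absolutely_integrable_on S" and S: "S \<in> sets borel"
    and meas: "f \<in> borel_measurable borel"
  shows "set_integrable lborel S f" "(LINT x:S|lborel. f x) = integral S f"
proof -
  have "(\<lambda>x. indicator S x *\<^sub>R f x) \<in> borel_measurable lborel"
    using S meas by measurable
  then show int: "set_integrable lborel S f"
    using f unfolding set_integrable_def by (simp add: integrable_completion)
  show "(LINT x:S|lborel. f x) = integral S f"
    by (rule set_borel_integral_eq_integral(2)[OF int])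
qed

lemma not_nonpos_Ints_if_Re_pos: "Re z > 0 \<Longrightarrow> z \<notin> \<int>\<^sub>\<le>\<^sub>0"
  by (auto elim!: nonpos_Ints_cases')

text \<open>Unlike \<^term>\<open>complex_of_real t powr w\<close>, this power is Borel measurable in \<open>t\<close> by
  construction; for \<open>t > 0\<close> the two agree.\<close>
definition cpowr :: "real \<Rightarrow> complex \<Rightarrow> complex" where
  "cpowr t w = exp (w * of_real (ln t))"

lemma cpowr_measurable [measurable]: "(\<lambda>t. cpowr t w) \<in> borel_measurable borel"
  unfolding cpowr_def by measurable

lemma cpowr_1 [simp]: "cpowr 1 w = 1"
  by (simp add: cpowr_def)

lemma cpowr_eq_powr: "t > 0 \<Longrightarrow> cpowr t w = of_real t powr w"
  by (simp add: cpowr_def powr_def Ln_of_real mult.commute)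

lemma cpowr_of_real: "cpowr t (of_real x) = of_real (exp (x * ln t))"
  by (simp add: cpowr_def exp_of_real flip: of_real_mult)

lemma cpowr_of_real_pos: "t > 0 \<Longrightarrow> cpowr t (of_real x) = of_real (t powr x)"
  by (simp add: cpowr_of_real powr_def)

lemma norm_cpowr: "norm (cpowr t w) = exp (Re w * ln t)"
  by (simp add: cpowr_def)

lemma cpowr_mult: "t > 0 \<Longrightarrow> u > 0 \<Longrightarrow> cpowr (t * u) w = cpowr t w * cpowr u w"
  by (simp add: cpowr_def ln_mult distrib_left exp_add)

lemma cpowr_add: "cpowr t (v + w) = cpowr t v * cpowr t w"
  by (simp add: cpowr_def distrib_right exp_add)

lemma Gamma_integral_lborel:
  assumes "Re z > 0"
  shows "set_integrable lborel {0<..} (\<lambda>t. cpowr t (z - 1) * of_real (exp (- t)))"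
    "(LINT t:{0<..}|lborel. cpowr t (z - 1) * of_real (exp (- t))) = Gamma z"
proof -
  have eq: "cpowr t (z - 1) * of_real (exp (- t)) = of_real t powr (z - 1) / of_real (exp t)"
    if "t \<in> {0<..}" for t
    using that by (simp add: cpowr_eq_powr exp_minus field_simps)
  have abs: "(\<lambda>t. cpowr t (z - 1) * of_real (exp (- t))) absolutely_integrable_on {0<..}"
    using absolutely_integrable_Gamma_integral'[OF assms]
    by (rule iffD1[OF set_integrable_cong, rotated 3]) (auto simp: eq)
  have "integral {0<..} (\<lambda>t. cpowr t (z - 1) * of_real (exp (- t))) =
      integral {0<..} (\<lambda>t. of_real t powr (z - 1) / of_real (exp t))"
    by (rule integral_cong) (rule eq)
  also have "\<dots> = Gamma z"
    by (rule integral_unique[OF Gamma_integral_complex'[OF assms]])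
  finally have val: "integral {0<..} (\<lambda>t. cpowr t (z - 1) * of_real (exp (- t))) = Gamma z" .
  have "(\<lambda>t. cpowr t (z - 1) * of_real (exp (- t))) \<in> borel_measurable borel"
    by measurable
  from absolutely_integrable_on_imp_set_integrable_lborel[OF abs _ this]
  show "set_integrable lborel {0<..} (\<lambda>t. cpowr t (z - 1) * of_real (exp (- t)))"
    "(LINT t:{0<..}|lborel. cpowr t (z - 1) * of_real (exp (- t))) = Gamma z"
    using val by (simp_all add: borel_open)
qed

lemma Gamma_integral_scaled:
  fixes z :: complex and l :: real
  assumes z: "Re z > 0" and l: "l > 0"
  shows "set_integrable lborel {0<..} (\<lambda>t. cpowr t (z - 1) * of_real (exp (- (l * t))))"
    "(LINT t:{0<..}|lborel. cpowr t (z - 1) * of_real (exp (- (l * t)))) = Gamma z * cpowr l (- z)"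
proof -
  define G where "G = (\<lambda>t. indicator {0<..} t *\<^sub>R (cpowr t (z - 1) * of_real (exp (- t))))"
  have G: "integrable lborel G" "integral\<^sup>L lborel G = Gamma z"
    using Gamma_integral_lborel[OF z] by (simp_all add: G_def set_integrable_def set_lebesgue_integral_def)
  have "complex_of_real l = cpowr l 1"
    using l by (simp add: cpowr_def exp_of_real)
  then have "of_real l * cpowr l (- z) * cpowr l (z - 1) = cpowr l (1 + - z + (z - 1))"
    by (simp only: cpowr_add)
  then have "of_real l * cpowr l (- z) * cpowr l (z - 1) = 1"
    by (simp add: cpowr_def)
  then have scaled: "indicator {0<..} t *\<^sub>R (cpowr t (z - 1) * of_real (exp (- (l * t)))) =
      of_real l * cpowr l (- z) * G (0 + l * t)" for t
    using l by (cases "t > 0") (auto simp: G_def cpowr_mult zero_less_mult_iff mult.assoc)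
  show "set_integrable lborel {0<..} (\<lambda>t. cpowr t (z - 1) * of_real (exp (- (l * t))))"
    unfolding set_integrable_def scaled using lborel_integrable_real_affine[OF G(1), of l 0] l by simp
  have "Gamma z = of_real l * (\<integral>t. G (0 + l * t) \<partial>lborel)"
    using lborel_integral_real_affine[of l G 0] G(2) l by (simp add: scaleR_conv_of_real)
  then show "(LINT t:{0<..}|lborel. cpowr t (z - 1) * of_real (exp (- (l * t)))) = Gamma z * cpowr l (- z)"
    unfolding set_lebesgue_integral_def scaled by (simp add: mult_ac)
qed

lemma Gamma_integral_scaled_indicator:
  fixes z K :: complex and l :: real
  assumes "Re z > 0" and "l > 0"
  shows "integrable lborel
      (\<lambda>y. indicator {0<..} y *\<^sub>R (K * (cpowr y (z - 1) * of_real (exp (- (l * y))))))"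
    "(\<integral>y. indicator {0<..} y *\<^sub>R (K * (cpowr y (z - 1) * of_real (exp (- (l * y))))) \<partial>lborel) =
      K * (Gamma z * cpowr l (- z))"
proof -
  show "integrable lborel
      (\<lambda>y. indicator {0<..} y *\<^sub>R (K * (cpowr y (z - 1) * of_real (exp (- (l * y))))))"
    using set_integrable_mult_right[OF Gamma_integral_scaled(1)[OF assms], of K]
    unfolding set_integrable_def .
  have "(LINT y:{0<..}|lborel. K * (cpowr y (z - 1) * of_real (exp (- (l * y))))) =
      K * (Gamma z * cpowr l (- z))"
    using Gamma_integral_scaled(2)[OF assms] by simp
  then show "(\<integral>y. indicator {0<..} y *\<^sub>R (K * (cpowr y (z - 1) * of_real (exp (- (l * y))))) \<partial>lborel) =
      K * (Gamma z * cpowr l (- z))"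
    unfolding set_lebesgue_integral_def .
qed

text \<open>Integrating out \<open>y\<close> gives \<open>\<Gamma>(s) t\<^sup>c\<^sup>-\<^sup>s\<^sup>-\<^sup>1 e\<^sup>-\<^sup>t\<close>, integrating out \<open>t\<close> gives
  \<open>\<Gamma>(c) y\<^sup>s\<^sup>-\<^sup>1 (1 + y)\<^sup>-\<^sup>c\<close>; Fubini turns this into the Beta integral of the second kind.\<close>
definition gamma_beta_kernel :: "real \<Rightarrow> complex \<Rightarrow> real \<Rightarrow> real \<Rightarrow> complex" where
  "gamma_beta_kernel c s t y =
     indicator {0<..} t *\<^sub>R (indicator {0<..} y *\<^sub>R
       ((cpowr t (of_real c - 1) * of_real (exp (- t))) * (cpowr y (s - 1) * of_real (exp (- (t * y))))))"

lemma gamma_beta_kernel_measurable [measurable]: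
  "case_prod (gamma_beta_kernel c s) \<in> borel_measurable (lborel \<Otimes>\<^sub>M lborel)"
  unfolding gamma_beta_kernel_def by measurable

lemma integral_gamma_beta_kernel_snd:
  assumes "Re s > 0"
  shows "integrable lborel (gamma_beta_kernel c s t)" (is ?integrable)
    "(\<integral>y. gamma_beta_kernel c s t y \<partial>lborel) =
      indicator {0<..} t *\<^sub>R (Gamma s * (cpowr t (of_real c - s - 1) * of_real (exp (- t))))"
    (is ?value)
proof -
  have "?integrable \<and> ?value"
  proof (cases "t > 0")
    case True
    define K where "K = cpowr t (of_real c - 1) * of_real (exp (- t))"
    have "gamma_beta_kernel c s t =
        (\<lambda>y. indicator {0<..} y *\<^sub>R (K * (cpowr y (s - 1) * of_real (exp (- (t * y))))))"
      using True by (simp add: gamma_beta_kernel_def K_def fun_eq_iff)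
    moreover have "K * (Gamma s * cpowr t (- s)) =
        Gamma s * (cpowr t (of_real c - s - 1) * of_real (exp (- t)))"
      by (simp add: K_def cpowr_add[symmetric] algebra_simps)
    ultimately show ?thesis
      using Gamma_integral_scaled_indicator[OF assms True, of K] True by simp
  next
    case False
    then have "gamma_beta_kernel c s t = (\<lambda>_. 0)"
      by (simp add: gamma_beta_kernel_def fun_eq_iff)
    with False show ?thesis by simp
  qed
  then show ?integrable ?value by simp_all
qed

lemma integral_gamma_beta_kernel_fst:
  assumes "c > 0"
  shows "(\<integral>t. gamma_beta_kernel c s t y \<partial>lborel) =
    indicator {0<..} y *\<^sub>R (Gamma (of_real c) * (cpowr y (s - 1) * of_real ((1 + y) powr (- c))))"
proof (cases "y > 0")
  case True
  have "Re (of_real c) > 0" "1 + y > 0"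
    using assms True by simp_all
  note Gamma_y = Gamma_integral_scaled_indicator(2)[OF this, of "cpowr y (s - 1)"]
  have "exp (- t) * exp (- (t * y)) = exp (- ((1 + y) * t))" for t
    by (simp add: exp_add[symmetric] algebra_simps)
  then have "gamma_beta_kernel c s t y = indicator {0<..} t *\<^sub>R
      (cpowr y (s - 1) * (cpowr t (of_real c - 1) * of_real (exp (- ((1 + y) * t)))))" for t
    using True by (simp add: gamma_beta_kernel_def algebra_simps flip: of_real_mult)
  then show ?thesis
    using Gamma_y True \<open>1 + y > 0\<close> cpowr_of_real_pos[of "1 + y" "- c"] by simp
qed (simp add: gamma_beta_kernel_def)

lemma integrable_gamma_beta_kernel:
  assumes c: "c > 0" and s: "Re s > 0" "Re s < c"
  shows "integrable (lborel \<Otimes>\<^sub>M lborel) (case_prod (gamma_beta_kernel c s))"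
proof -
  define \<sigma> where "\<sigma> = complex_of_real (Re s)"
  have \<sigma>: "Re \<sigma> > 0" "Re (of_real c - \<sigma>) > 0"
    using s by (auto simp: \<sigma>_def)
  have norm_eq: "complex_of_real (norm (gamma_beta_kernel c s t y)) = gamma_beta_kernel c \<sigma> t y" for t y
  proof -
    have "cpowr t (of_real c - 1) = of_real (exp ((c - 1) * ln t))"
      "cpowr y (\<sigma> - 1) = of_real (exp ((Re s - 1) * ln y))"
      using cpowr_of_real[of t "c - 1"] cpowr_of_real[of y "Re s - 1"] by (simp_all add: \<sigma>_def)
    then show ?thesis
      by (simp add: gamma_beta_kernel_def norm_mult norm_cpowr cpowr_of_real indicator_def)
  qed
  have "(\<lambda>t. complex_of_real (\<integral>y. norm (gamma_beta_kernel c s t y) \<partial>lborel)) =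
      (\<lambda>t. indicator {0<..} t *\<^sub>R (Gamma \<sigma> * (cpowr t (of_real c - \<sigma> - 1) * of_real (exp (- t)))))"
    by (simp only: integral_complex_of_real[symmetric] norm_eq integral_gamma_beta_kernel_snd(2)[OF \<sigma>(1)])
  moreover have "integrable lborel
      (\<lambda>t. indicator {0<..} t *\<^sub>R (Gamma \<sigma> * (cpowr t (of_real c - \<sigma> - 1) * of_real (exp (- t)))))"
    using Gamma_integral_scaled_indicator(1)[OF \<sigma>(2) zero_less_one] by simp
  ultimately have "integrable lborel (\<lambda>t. \<integral>y. norm (gamma_beta_kernel c s t y) \<partial>lborel)"
    by (metis complex_of_real_integrable_eq)
  then show ?thesis
    using lborel_pair.Fubini_integrable[of "case_prod (gamma_beta_kernel c s)"]
      integral_gamma_beta_kernel_snd(1)[OF s(1)]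
    by simp
qed

lemma Beta_integral_second_kind:
  fixes c :: real and s :: complex
  assumes c: "c > 0" and s: "Re s > 0" "Re s < c"
  shows "set_integrable lborel {0<..} (\<lambda>y. cpowr y (s - 1) * of_real ((1 + y) powr (- c)))"
    "(LINT y:{0<..}|lborel. cpowr y (s - 1) * of_real ((1 + y) powr (- c))) = Beta s (of_real c - s)"
proof -
  note kernel = integrable_gamma_beta_kernel[OF assms]
  have "Gamma (complex_of_real c) \<noteq> 0"
    using c by (simp add: Gamma_eq_zero_iff not_nonpos_Ints_if_Re_pos)
  moreover have "set_integrable lborel {0<..}
      (\<lambda>y. Gamma (of_real c) * (cpowr y (s - 1) * of_real ((1 + y) powr (- c))))"
    using lborel_pair.integrable_snd[OF kernel]
    unfolding integral_gamma_beta_kernel_fst[OF c] set_integrable_def .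
  ultimately show "set_integrable lborel {0<..} (\<lambda>y. cpowr y (s - 1) * of_real ((1 + y) powr (- c)))"
    by simp
  have "Gamma (of_real c) * (LINT y:{0<..}|lborel. cpowr y (s - 1) * of_real ((1 + y) powr (- c))) =
      (LINT y:{0<..}|lborel. Gamma (of_real c) * (cpowr y (s - 1) * of_real ((1 + y) powr (- c))))"
    by (rule set_integral_mult_right[symmetric])
  also have "\<dots> = (\<integral>y. \<integral>t. gamma_beta_kernel c s t y \<partial>lborel \<partial>lborel)"
    unfolding integral_gamma_beta_kernel_fst[OF c] set_lebesgue_integral_def ..
  also have "\<dots> = (\<integral>t. \<integral>y. gamma_beta_kernel c s t y \<partial>lborel \<partial>lborel)"
    by (rule lborel_pair.Fubini_integral[OF kernel])
  also have "\<dots> = Gamma s * Gamma (of_real c - s)"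
    using Gamma_integral_scaled_indicator(2)[of "of_real c - s" 1 "Gamma s"] s
    by (simp add: integral_gamma_beta_kernel_snd(2)[OF s(1)])
  finally show "(LINT y:{0<..}|lborel. cpowr y (s - 1) * of_real ((1 + y) powr (- c))) =
      Beta s (of_real c - s)"
    using \<open>Gamma (complex_of_real c) \<noteq> 0\<close> by (simp add: Beta_def field_simps)
qed

lemma integral_exp_neg_substitution:
  fixes h :: "real \<Rightarrow> complex"
  assumes h: "set_integrable lborel {0<..} h" and meas: "h \<in> borel_measurable borel"
  shows "integrable lborel (\<lambda>t. (2 * exp (- 2 * t)) *\<^sub>R h (exp (- 2 * t)))"
    "(\<integral>t. (2 * exp (- 2 * t)) *\<^sub>R h (exp (- 2 * t)) \<partial>lborel) = (LINT y:{0<..}|lborel. h y)"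
proof -
  have "h absolutely_integrable_on {0<..}"
    using h meas integrable_completion[of "\<lambda>x. indicator {0<..} x *\<^sub>R h x" lborel]
    unfolding set_integrable_def by (simp add: borel_measurable_indicator)
  moreover have "integral {0<..} h = (LINT y:{0<..}|lborel. h y)"
    using set_borel_integral_eq_integral(2)[OF h] by simp
  moreover have "x \<in> range (\<lambda>t. exp (- 2 * t))" if "x > 0" for x :: real
    using that by (intro image_eqI[of _ _ "- ln x / 2"]) auto
  then have "range (\<lambda>t. exp (- 2 * t)) = ({0<..} :: real set)"
    by auto
  moreover have "inj (\<lambda>t::real. exp (- 2 * t))"
    by (auto simp: inj_on_def)
  moreover have "((\<lambda>t. exp (- 2 * t)) has_real_derivative (- 2 * exp (- 2 * x))) (at x within UNIV)"
    for x :: real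
    by (auto intro!: derivative_eq_intros)
  ultimately have subst: "(\<lambda>t. (2 * exp (- 2 * t)) *\<^sub>R h (exp (- 2 * t))) absolutely_integrable_on UNIV \<and>
      integral UNIV (\<lambda>t. (2 * exp (- 2 * t)) *\<^sub>R h (exp (- 2 * t))) = (LINT y:{0<..}|lborel. h y)"
    using has_absolute_integral_change_of_variables_real[of UNIV "\<lambda>t. exp (- 2 * t)"
        "\<lambda>t. - 2 * exp (- 2 * t)" h "LINT y:{0<..}|lborel. h y"]
    by simp
  have "(\<lambda>t. (2 * exp (- 2 * t)) *\<^sub>R h (exp (- 2 * t))) \<in> borel_measurable borel"
    using meas by measurable
  from absolutely_integrable_on_imp_set_integrable_lborel[OF conjunct1[OF subst] _ this]
  show "integrable lborel (\<lambda>t. (2 * exp (- 2 * t)) *\<^sub>R h (exp (- 2 * t)))"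
    "(\<integral>t. (2 * exp (- 2 * t)) *\<^sub>R h (exp (- 2 * t)) \<partial>lborel) = (LINT y:{0<..}|lborel. h y)"
    using subst by (simp_all add: set_integrable_def set_lebesgue_integral_def)
qed

lemma Beta_integral_exp:
  fixes c :: real and s :: complex
  assumes c: "c > 0" and s: "Re s > 0" "Re s < c"
  shows "integrable lborel (\<lambda>t. exp (- (2 * s * of_real t)) * of_real ((1 + exp (- 2 * t)) powr (- c)))"
    "(\<integral>t. exp (- (2 * s * of_real t)) * of_real ((1 + exp (- 2 * t)) powr (- c)) \<partial>lborel) =
      Beta s (of_real c - s) / 2"
proof -
  define h where "h = (\<lambda>y. cpowr y (s - 1) * of_real ((1 + y) powr (- c)))"
  have "h \<in> borel_measurable borel"
    unfolding h_def by measurable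
  note subst = integral_exp_neg_substitution[OF Beta_integral_second_kind(1)[OF assms, folded h_def] this]
  have "(2 * exp (- 2 * t)) *\<^sub>R h (exp (- 2 * t)) =
      2 * (exp (- (2 * s * of_real t)) * of_real ((1 + exp (- 2 * t)) powr (- c)))" for t :: real
  proof -
    have "cpowr (exp (- 2 * t)) (s - 1) = exp ((s - 1) * of_real (- 2 * t))"
      by (simp add: cpowr_def)
    moreover have "complex_of_real (exp (- 2 * t)) = exp (of_real (- 2 * t))"
      by (rule exp_of_real[symmetric])
    ultimately have "of_real (exp (- 2 * t)) * cpowr (exp (- 2 * t)) (s - 1) = exp (- (2 * s * of_real t))"
      by (simp add: exp_add[symmetric] algebra_simps)
    then show ?thesis
      by (simp add: h_def scaleR_conv_of_real algebra_simps)
  qed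
  note subst = subst[unfolded this]
  show "integrable lborel (\<lambda>t. exp (- (2 * s * of_real t)) * of_real ((1 + exp (- 2 * t)) powr (- c)))"
    using integrable_mult_right[OF subst(1), of "1 / 2"] by simp
  show "(\<integral>t. exp (- (2 * s * of_real t)) * of_real ((1 + exp (- 2 * t)) powr (- c)) \<partial>lborel) =
      Beta s (of_real c - s) / 2"
    using subst(2) Beta_integral_second_kind(2)[OF assms] by (simp add: h_def mult.commute)
qed

lemma one_minus_tanh_sq_eq: "1 - tanh t ^ 2 = 4 * exp (- 2 * t) / (1 + exp (- 2 * t)) ^ 2"
  for t :: real
proof -
  define e where "e = exp (- 2 * t)"
  have "1 + e > 0"
    by (simp add: e_def add_pos_pos)
  then have "1 - ((1 - e) / (1 + e)) ^ 2 = 4 * e / (1 + e) ^ 2"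
    by (simp add: divide_simps) (simp add: power2_eq_square algebra_simps)
  then show ?thesis
    unfolding tanh_real_altdef e_def .
qed

lemma one_minus_tanh_half_eq: "(1 - tanh t) / 2 = exp (- 2 * t) / (1 + exp (- 2 * t))"
  for t :: real
proof -
  define e where "e = exp (- 2 * t)"
  have "1 + e > 0"
    by (simp add: e_def add_pos_pos)
  then have "(1 - (1 - e) / (1 + e)) / 2 = e / (1 + e)"
    by (simp add: divide_simps)
  then show ?thesis
    unfolding tanh_real_altdef e_def .
qed

lemma one_minus_tanh_sq_pos: "1 - tanh t ^ 2 > 0"
  for t :: real
proof -
  have "\<bar>tanh t\<bar> < 1"
    by (simp add: abs_less_iff tanh_real_lt_1 tanh_real_gt_neg1)
  then show ?thesis
    by (simp add: abs_square_less_1)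
qed

lemma one_minus_tanh_sq_powr_mult_power:
  fixes t b :: real and k :: nat
  shows "(1 - tanh t ^ 2) powr b * ((1 - tanh t) / 2) ^ k =
    4 powr b * exp (- (2 * (b + k) * t)) * (1 + exp (- 2 * t)) powr (- (2 * b + k))"
proof -
  define e where "e = exp (- 2 * t)"
  have e: "e > 0"
    by (simp add: e_def)
  have "(1 + e) ^ 2 = (1 + e) powr 2"
    using e by (simp add: powr_realpow)
  then have "((1 + e) ^ 2) powr b = (1 + e) powr (2 * b)"
    by (simp add: powr_powr)
  moreover have "(4 * e / (1 + e) ^ 2) powr b = 4 powr b * e powr b / ((1 + e) ^ 2) powr b"
    using e by (simp add: powr_divide powr_mult)
  ultimately have "(4 * e / (1 + e) ^ 2) powr b = 4 powr b * e powr b * (1 + e) powr (- 2 * b)"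
    by (simp add: powr_minus divide_inverse)
  moreover have "(e / (1 + e)) ^ k = e powr k * (1 + e) powr (- real k)"
    using e by (simp add: powr_realpow powr_minus divide_inverse power_mult_distrib power_inverse)
  moreover have "e powr b * e powr k = exp (- (2 * (b + k) * t))"
    by (simp add: e_def exp_powr_real flip: exp_add) (simp add: algebra_simps)
  moreover have "(1 + e) powr (- 2 * b) * (1 + e) powr (- real k) = (1 + e) powr (- (2 * b + k))"
    by (simp add: powr_add[symmetric])
  ultimately show ?thesis
    unfolding one_minus_tanh_sq_eq one_minus_tanh_half_eq e_def[symmetric]
    by (simp add: mult_ac)
qed

lemma fourier_tanh_power:
  fixes b \<xi> :: real and k :: nat
  assumes b: "b > 0"
  shows "integrable lborel (\<lambda>t. exp (- \<i> * of_real (\<xi> * t)) *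
      of_real ((1 - tanh t ^ 2) powr b * ((1 - tanh t) / 2) ^ k))"
    "(\<integral>t. exp (- \<i> * of_real (\<xi> * t)) *
        of_real ((1 - tanh t ^ 2) powr b * ((1 - tanh t) / 2) ^ k) \<partial>lborel) =
      of_real (2 powr (2 * b - 1)) *
        Beta (of_real b - \<i> * of_real \<xi> / 2) (of_real b + of_nat k + \<i> * of_real \<xi> / 2)"
proof -
  define s where "s = of_real b + of_nat k + \<i> * of_real \<xi> / 2"
  define c where "c = 2 * b + real k"
  have c: "c > 0" "Re s > 0" "Re s < c"
    using b by (auto simp: c_def s_def)
  have exp_eq: "exp (- \<i> * of_real (\<xi> * t)) * of_real (exp (- (2 * (b + k) * t))) =
      exp (- (2 * s * of_real t))" for t
    by (simp add: s_def algebra_simps flip: exp_of_real exp_add)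
  have eq: "exp (- \<i> * of_real (\<xi> * t)) * of_real ((1 - tanh t ^ 2) powr b * ((1 - tanh t) / 2) ^ k) =
      of_real (4 powr b) * (exp (- (2 * s * of_real t)) * of_real ((1 + exp (- 2 * t)) powr (- c)))"
    for t
    unfolding one_minus_tanh_sq_powr_mult_power c_def using exp_eq[of t] by (simp add: algebra_simps)
  note integral = Beta_integral_exp[OF c]
  show "integrable lborel (\<lambda>t. exp (- \<i> * of_real (\<xi> * t)) *
      of_real ((1 - tanh t ^ 2) powr b * ((1 - tanh t) / 2) ^ k))"
    unfolding eq using integral(1) by simp
  have "complex_of_real (4 powr b) = 2 * of_real (2 powr (2 * b - 1))"
    by (simp add: powr_diff flip: powr_powr)
  moreover have "of_real c - s = of_real b - \<i> * of_real \<xi> / 2"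
    by (simp add: c_def s_def)
  ultimately show "(\<integral>t. exp (- \<i> * of_real (\<xi> * t)) *
        of_real ((1 - tanh t ^ 2) powr b * ((1 - tanh t) / 2) ^ k) \<partial>lborel) =
      of_real (2 powr (2 * b - 1)) *
        Beta (of_real b - \<i> * of_real \<xi> / 2) (of_real b + of_nat k + \<i> * of_real \<xi> / 2)"
    unfolding eq integral_mult_right_zero integral(2) s_def[symmetric] by (simp add: Beta_commute)
qed

lemma Beta_add_nat_pochhammer:
  fixes a b :: "'a :: Gamma"
  assumes a: "a \<notin> \<int>\<^sub>\<le>\<^sub>0" and ab: "a + b \<notin> \<int>\<^sub>\<le>\<^sub>0"
  shows "Beta b (a + of_nat k) = Beta a b * pochhammer a k / pochhammer (a + b) k"
proof -
  have "Gamma a \<noteq> 0" "Gamma (a + b) \<noteq> 0"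
    using a ab by (simp_all add: Gamma_eq_zero_iff)
  moreover have "pochhammer (a + b) k \<noteq> 0"
    using ab by (auto simp: pochhammer_eq_0_iff)
  ultimately show ?thesis
    using pochhammer_Gamma[OF a, of k] pochhammer_Gamma[OF ab, of k]
    by (simp add: Beta_def add_ac field_simps)
qed

lemma hypergeom_neg_nat:
  fixes as bs :: "'a::{real_normed_field,banach} list"
  shows "hypergeom (- of_nat n # as) bs x =
    (\<Sum>k\<le>n. (pochhammer (- of_nat n) k * prod_list (map (\<lambda>c. pochhammer c k) as)
      / prod_list (map (\<lambda>c. pochhammer c k) bs)) * x ^ k / of_nat (fact k))"
    (is "_ = sum ?term {..n}")
proof -
  have "?term sums sum ?term {..n}"
    by (rule sums_finite) (auto simp: pochhammer_of_nat_eq_0_iff)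
  then show ?thesis
    unfolding hypergeom_def by (simp add: sums_iff)
qed

lemma fourier_tanh_power_pochhammer:
  fixes b \<xi> :: real and k :: nat
  assumes b: "b > 0"
  defines "\<alpha> \<equiv> of_real b + \<i> * of_real \<xi> / 2" and "\<beta> \<equiv> of_real b - \<i> * of_real \<xi> / 2"
  shows "(\<integral>t. exp (- \<i> * of_real (\<xi> * t)) *
        of_real ((1 - tanh t ^ 2) powr b * ((1 - tanh t) / 2) ^ k) \<partial>lborel) =
      of_real (2 powr (2 * b - 1)) * Beta \<alpha> \<beta> * (pochhammer \<alpha> k / pochhammer (of_real (2 * b)) k)"
proof -
  have \<alpha>\<beta>: "\<alpha> + \<beta> = of_real (2 * b)"
    by (simp add: \<alpha>_def \<beta>_def)
  have "\<alpha> \<notin> \<int>\<^sub>\<le>\<^sub>0"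
    using b by (intro not_nonpos_Ints_if_Re_pos) (simp add: \<alpha>_def)
  moreover have "\<alpha> + \<beta> \<notin> \<int>\<^sub>\<le>\<^sub>0"
    unfolding \<alpha>\<beta> using b by (intro not_nonpos_Ints_if_Re_pos) simp
  ultimately have shift: "Beta \<beta> (\<alpha> + of_nat k) = Beta \<alpha> \<beta> * pochhammer \<alpha> k / pochhammer (\<alpha> + \<beta>) k"
    by (rule Beta_add_nat_pochhammer)
  have \<alpha>_shift: "of_real b + of_nat k + \<i> * of_real \<xi> / 2 = \<alpha> + of_nat k"
    by (simp add: \<alpha>_def)
  show ?thesis
    unfolding fourier_tanh_power(2)[OF b] \<beta>_def[symmetric] \<alpha>_shift unfolding shift \<alpha>\<beta>
    by (simp only: mult.assoc times_divide_eq_right)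
qed

lemma gegenbauer_eq_sum:
  "gegenbauer n lam x = pochhammer (2 * lam) n / fact n *
    (\<Sum>k\<le>n. pochhammer (- real n) k * pochhammer (real n + 2 * lam) k / pochhammer (lam + 1 / 2) k
      / fact k * ((1 - x) / 2) ^ k)"
  unfolding gegenbauer_def hypergeom_neg_nat by simp

lemma hypergeom_3F2_neg_nat_eq_sum:
  fixes \<alpha> \<beta> :: complex
  shows "hypergeom [- of_nat n, of_real p, \<alpha>] [of_real q, \<beta>] 1 =
    (\<Sum>k\<le>n. of_real (pochhammer (- real n) k * pochhammer p k / pochhammer q k / fact k) *
      (pochhammer \<alpha> k / pochhammer \<beta> k))"
proof -
  have neg: "- of_nat n = (of_real (- real n) :: complex)"
    by simp
  have regroup: "x * (y * u) / (z * v) / w = x * y / z / w * (u / v)" for x y z w u v :: complex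
    by (simp add: divide_inverse mult_ac)
  show ?thesis
    unfolding hypergeom_neg_nat unfolding neg
    by (intro sum.cong refl)
      (simp only: list.map prod_list.Cons prod_list.Nil mult_1_right power_one pochhammer_of_real
        of_real_mult of_real_divide of_nat_fact of_real_fact regroup)
qed

lemma fourier_tanh_gegenbauer:
  fixes b lam \<xi> :: real and n :: nat
  assumes b: "b > 0"
  shows "integrable lborel (\<lambda>t. exp (- \<i> * of_real (\<xi> * t)) *
      of_real ((1 - tanh t ^ 2) powr b * gegenbauer n lam (tanh t)))"
    "(\<integral>t. exp (- \<i> * of_real (\<xi> * t)) *
        of_real ((1 - tanh t ^ 2) powr b * gegenbauer n lam (tanh t)) \<partial>lborel) =
      of_real (2 powr (2 * b - 1)) * of_real (pochhammer (2 * lam) n / fact n) *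
      Beta (of_real b + \<i> * of_real \<xi> / 2) (of_real b - \<i> * of_real \<xi> / 2) *
      hypergeom [- of_nat n, of_real (real n + 2 * lam), of_real b + \<i> * of_real \<xi> / 2]
        [of_real (lam + 1 / 2), of_real (2 * b)] 1"
proof -
  define P where "P = pochhammer (2 * lam) n / fact n"
  define coeff where "coeff k = pochhammer (- real n) k * pochhammer (real n + 2 * lam) k
      / pochhammer (lam + 1 / 2) k / fact k" for k
  define J where "J k t = exp (- \<i> * of_real (\<xi> * t)) *
      of_real ((1 - tanh t ^ 2) powr b * ((1 - tanh t) / 2) ^ k)" for k t
  have integrand: "exp (- \<i> * of_real (\<xi> * t)) *
      of_real ((1 - tanh t ^ 2) powr b * gegenbauer n lam (tanh t)) =
      (\<Sum>k\<le>n. of_real (P * coeff k) * J k t)" for t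
    unfolding J_def gegenbauer_eq_sum P_def coeff_def by (simp add: sum_distrib_left mult_ac)
  have J_int: "integrable lborel (J k)" for k
    unfolding J_def by (rule fourier_tanh_power(1)[OF b])
  show "integrable lborel (\<lambda>t. exp (- \<i> * of_real (\<xi> * t)) *
      of_real ((1 - tanh t ^ 2) powr b * gegenbauer n lam (tanh t)))"
    unfolding integrand using J_int by auto
  have "(\<integral>t. (\<Sum>k\<le>n. of_real (P * coeff k) * J k t) \<partial>lborel) =
      (\<Sum>k\<le>n. of_real (P * coeff k) * (\<integral>t. J k t \<partial>lborel))"
    using J_int by (simp add: Bochner_Integration.integral_sum)
  also have "\<dots> = of_real (2 powr (2 * b - 1)) * of_real P *
      Beta (of_real b + \<i> * of_real \<xi> / 2) (of_real b - \<i> * of_real \<xi> / 2) *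
      (\<Sum>k\<le>n. of_real (coeff k) * (pochhammer (of_real b + \<i> * of_real \<xi> / 2) k /
        pochhammer (of_real (2 * b)) k))"
    unfolding J_def fourier_tanh_power_pochhammer[OF b] sum_distrib_left
    by (intro sum.cong refl) (simp only: of_real_mult mult_ac)
  finally show "(\<integral>t. exp (- \<i> * of_real (\<xi> * t)) *
        of_real ((1 - tanh t ^ 2) powr b * gegenbauer n lam (tanh t)) \<partial>lborel) =
      of_real (2 powr (2 * b - 1)) * of_real (pochhammer (2 * lam) n / fact n) *
      Beta (of_real b + \<i> * of_real \<xi> / 2) (of_real b - \<i> * of_real \<xi> / 2) *
      hypergeom [- of_nat n, of_real (real n + 2 * lam), of_real b + \<i> * of_real \<xi> / 2]
        [of_real (lam + 1 / 2), of_real (2 * b)] 1"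
    unfolding integrand P_def[symmetric] hypergeom_3F2_neg_nat_eq_sum coeff_def .
qed

lemma prod_prefix_prod_powr:
  fixes u e :: "nat \<Rightarrow> real"
  assumes u: "\<And>k. u k > 0"
  shows "(\<Prod>j=1..r. (\<Prod>k=1..<j. u k) powr e j) = (\<Prod>k=1..r. u k powr (\<Sum>j=k+1..r. e j))"
proof -
  have "(\<Prod>j=1..r. (\<Prod>k=1..<j. u k) powr e j) = (\<Prod>j=1..r. \<Prod>k\<in>{k \<in> {1..r}. k < j}. u k powr e j)"
  proof (rule prod.cong[OF refl])
    fix j assume "j \<in> {1..r}"
    then have "{k \<in> {1..r}. k < j} = {1..<j}"
      by auto
    then show "(\<Prod>k=1..<j. u k) powr e j = (\<Prod>k\<in>{k \<in> {1..r}. k < j}. u k powr e j)"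
      by (simp add: prod_powr_distrib)
  qed
  also have "\<dots> = (\<Prod>k=1..r. \<Prod>j\<in>{j \<in> {1..r}. k < j}. u k powr e j)"
    by (rule prod.swap_restrict) auto
  also have "\<dots> = (\<Prod>k=1..r. u k powr (\<Sum>j=k+1..r. e j))"
  proof (rule prod.cong[OF refl])
    fix k assume "k \<in> {1..r}"
    then have "{j \<in> {1..r}. k < j} = {k+1..r}"
      by auto
    then show "(\<Prod>j\<in>{j \<in> {1..r}. k < j}. u k powr e j) = u k powr (\<Sum>j=k+1..r. e j)"
      using u[of k] by (simp add: powr_sum)
  qed
  finally show ?thesis .
qed

lemma sum_real_minus_index: "(\<Sum>k=1..r. (real r - real k)) = real r * (real r - 1) / 2"
proof -
  have "(\<Sum>k=1..r. real k) = real r * (real r + 1) / 2"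
    by (induction r) (simp_all add: field_simps)
  then show ?thesis
    by (simp add: sum_subtractf field_simps)
qed

lemma sum_tailsum:
  "(\<Sum>k=1..r. real (tailsum r n (k + 1))) = (\<Sum>j=1..r-1. real j * real (n (j + 1)))"
proof -
  have "(\<Sum>k=1..r. real (tailsum r n (k + 1))) = (\<Sum>k=1..r. \<Sum>i\<in>{i \<in> {1..r}. k < i}. real (n i))"
  proof (rule sum.cong[OF refl])
    fix k assume "k \<in> {1..r}"
    then have "{i \<in> {1..r}. k < i} = {k+1..r}"
      by auto
    then show "real (tailsum r n (k + 1)) = (\<Sum>i\<in>{i \<in> {1..r}. k < i}. real (n i))"
      by (simp add: tailsum_def)
  qed
  also have "\<dots> = (\<Sum>i=1..r. \<Sum>k\<in>{k \<in> {1..r}. k < i}. real (n i))"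
    by (rule sum.swap_restrict) auto
  also have "\<dots> = (\<Sum>i=1..r. real (i - 1) * real (n i))"
  proof (rule sum.cong[OF refl])
    fix i assume "i \<in> {1..r}"
    then have "{k \<in> {1..r}. k < i} = {1..<i}"
      by auto
    then show "(\<Sum>k\<in>{k \<in> {1..r}. k < i}. real (n i)) = real (i - 1) * real (n i)"
      by simp
  qed
  also have "\<dots> = (\<Sum>j=1..r-1. real j * real (n (j + 1)))"
  proof (cases r)
    case (Suc m)
    have "(\<Sum>i=1..r. real (i - 1) * real (n i)) = (\<Sum>j=0..m. real j * real (n (j + 1)))"
      unfolding Suc One_nat_def sum.shift_bounds_cl_Suc_ivl by simp
    also have "\<dots> = (\<Sum>j=1..m. real j * real (n (j + 1)))"
      by (simp add: sum.atLeast_Suc_atMost[of 0 m])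
    finally show ?thesis
      using Suc by simp
  qed simp
  finally show ?thesis .
qed

lemma one_minus_sum_upsilon_sq: "1 - (\<Sum>k=1..<j. (upsilon x k)\<^sup>2) = (\<Prod>k=1..<j. 1 - (tanh (x k))\<^sup>2)"
proof (induction j)
  case (Suc j)
  show ?case
  proof (cases "j \<ge> 1")
    case True
    have "(\<Prod>k=1..<j. 1 - (tanh (x k))\<^sup>2) \<ge> 0"
      using one_minus_tanh_sq_pos by (intro prod_nonneg) (auto intro: less_imp_le)
    then have "(upsilon x j)\<^sup>2 = (tanh (x j))\<^sup>2 * (\<Prod>k=1..<j. 1 - (tanh (x k))\<^sup>2)"
      unfolding upsilon_def by (simp add: power_mult_distrib)
    then show ?thesis
      using True Suc.IH by (simp add: atLeastLessThanSuc algebra_simps)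
  qed simp
qed simp

text \<open>Since \<open>1 - \<parallel>\<upsilon>\<^sub>j\<^sub>-\<^sub>1\<parallel>\<^sup>2\<close> is the product of the \<open>1 - tanh\<^sup>2 x\<^sub>k\<close> with \<open>k < j\<close>,
  the factors \<open>(1 - \<parallel>\<upsilon>\<^sub>i\<^sub>-\<^sub>1\<parallel>\<^sup>2)\<^bsup>n\<^sub>i/2\<^esup>\<close>, \<open>i > j\<close>, of the Ball polynomial contribute the extra
  exponent \<open>|n\<^bsup>j+1\<^esup>|/2\<close> to the \<open>j\<close>-th variable.\<close>
definition f_r_factor :: "nat \<Rightarrow> (nat \<Rightarrow> nat) \<Rightarrow> real \<Rightarrow> real \<Rightarrow> nat \<Rightarrow> real \<Rightarrow> real" where
  "f_r_factor r n a mu j t =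
     (1 - tanh t ^ 2) powr (a + (real r - real j) / 4 + real (tailsum r n (j + 1)) / 2)
     * gegenbauer (n j) (mu + real (tailsum r n (j + 1)) + (real r - real j) / 2) (tanh t)"

lemma f_r_eq_prod_factor: "f_r r n a mu x = (\<Prod>j=1..r. f_r_factor r n a mu j (x j))"
proof -
  define u where "u k = 1 - tanh (x k) ^ 2" for k
  have u: "u k > 0" for k
    unfolding u_def by (rule one_minus_tanh_sq_pos)
  define G where "G j = gegenbauer (n j) (mu + real (tailsum r n (j + 1)) + (real r - real j) / 2) (tanh (x j))"
    for j
  have "upsilon x j / sqrt (\<Prod>k=1..<j. u k) = tanh (x j)" for j
  proof -
    have "sqrt (\<Prod>k=1..<j. u k) \<noteq> 0"
      using u by (simp add: less_imp_neq[symmetric])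
    then show ?thesis
      unfolding upsilon_def u_def[symmetric] by (rule nonzero_mult_div_cancel_right)
  qed
  then have "ball_poly r mu n (upsilon x) = (\<Prod>j=1..r. (\<Prod>k=1..<j. u k) powr (real (n j) / 2) * G j)"
    unfolding ball_poly_def Let_def one_minus_sum_upsilon_sq G_def u_def by simp
  also have "\<dots> = (\<Prod>k=1..r. u k powr (real (tailsum r n (k + 1)) / 2)) * (\<Prod>j=1..r. G j)"
    unfolding prod.distrib prod_prefix_prod_powr[OF u]
    by (simp add: tailsum_def sum_divide_distrib)
  finally have ball: "ball_poly r mu n (upsilon x) =
      (\<Prod>k=1..r. u k powr (real (tailsum r n (k + 1)) / 2)) * (\<Prod>j=1..r. G j)" .
  have "f_r r n a mu x = (\<Prod>j=1..r. u j powr (a + (real r - real j) / 4)) * ball_poly r mu n (upsilon x)"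
    unfolding f_r_def u_def ..
  then show ?thesis
    unfolding ball f_r_factor_def u_def[symmetric] G_def[symmetric]
    by (simp add: prod.distrib powr_add mult_ac)
qed

lemma fourier_integrand_f_r_eq_prod:
  "fourier_integrand r (\<lambda>x. of_real (f_r r n a mu x)) xi x =
    (\<Prod>j=1..r. exp (- \<i> * of_real (xi j * x j)) * of_real (f_r_factor r n a mu j (x j)))"
proof -
  have "exp (- \<i> * of_real (\<Sum>j=1..r. xi j * x j)) = exp (\<Sum>j=1..r. - \<i> * of_real (xi j * x j))"
    by (simp add: sum_distrib_left)
  then show ?thesis
    unfolding fourier_integrand_def f_r_eq_prod_factor by (simp add: exp_sum prod.distrib)
qed

lemma fourier_f_r_factor:
  assumes a: "a > 0" and j: "j \<le> r"
  shows "integrable lborel (\<lambda>t. exp (- \<i> * of_real (\<xi> * t)) * of_real (f_r_factor r n a mu j t))"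
    "(\<integral>t. exp (- \<i> * of_real (\<xi> * t)) * of_real (f_r_factor r n a mu j t) \<partial>lborel) =
      of_real (2 powr (2 * (a + (real r - real j) / 4 + real (tailsum r n (j + 1)) / 2) - 1)) *
      (of_real (pochhammer (2 * (real (tailsum r n (j + 1)) + mu + (real r - real j) / 2)) (n j)
          / fact (n j)) * Theta r j a mu n \<xi>)"
proof -
  define N where "N = real (tailsum r n (j + 1))"
  define q where "q = real r - real j"
  define b where "b = a + q / 4 + N / 2"
  define lam where "lam = mu + N + q / 2"
  have b: "b > 0"
    using a j by (simp add: b_def q_def N_def add_pos_nonneg)
  have "complex_of_real a + (of_real N + \<i> * of_real \<xi>) / 2 + of_real (q / 4) = of_real b + \<i> * of_real \<xi> / 2"
    "complex_of_real a + (of_real N - \<i> * of_real \<xi>) / 2 + of_real (q / 4) = of_real b - \<i> * of_real \<xi> / 2"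
    "real (n j) + 2 * (N + mu + q / 2) = real (n j) + 2 * lam"
    "N + mu + (q + 1) / 2 = lam + 1 / 2"
    "N + 2 * a + q / 2 = 2 * b"
    by (simp_all add: b_def lam_def field_simps)
  then have Theta: "Theta r j a mu n \<xi> =
      Beta (of_real b + \<i> * of_real \<xi> / 2) (of_real b - \<i> * of_real \<xi> / 2) *
      hypergeom [- of_nat (n j), of_real (real (n j) + 2 * lam), of_real b + \<i> * of_real \<xi> / 2]
        [of_real (lam + 1 / 2), of_real (2 * b)] 1"
    unfolding Theta_def Let_def N_def[symmetric] q_def[symmetric] by simp
  have "f_r_factor r n a mu j = (\<lambda>t. (1 - tanh t ^ 2) powr b * gegenbauer (n j) lam (tanh t))"
    by (simp add: f_r_factor_def b_def lam_def N_def q_def fun_eq_iff)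
  moreover have "2 * (N + mu + q / 2) = 2 * lam"
    by (simp add: lam_def)
  ultimately show
    "integrable lborel (\<lambda>t. exp (- \<i> * of_real (\<xi> * t)) * of_real (f_r_factor r n a mu j t))"
    "(\<integral>t. exp (- \<i> * of_real (\<xi> * t)) * of_real (f_r_factor r n a mu j t) \<partial>lborel) =
      of_real (2 powr (2 * (a + (real r - real j) / 4 + real (tailsum r n (j + 1)) / 2) - 1)) *
      (of_real (pochhammer (2 * (real (tailsum r n (j + 1)) + mu + (real r - real j) / 2)) (n j)
          / fact (n j)) * Theta r j a mu n \<xi>)"
    unfolding N_def[symmetric] q_def[symmetric] b_def[symmetric] Theta
    using fourier_tanh_gegenbauer[OF b, of \<xi> "n j" lam] by (simp_all add: mult_ac)
qed

lemma Theta_eq_cont_hahn: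
  assumes a: "a > 0" and mu: "mu > - 1 / 2" and j: "j \<le> r"
  shows "Theta r j a mu n \<xi> =
    (let N = real (tailsum r n (j + 1));
         q = real r - real j
     in of_nat (fact (n j))
        / (\<i> ^ (n j) * of_real (pochhammer (N + mu + (q + 1) / 2) (n j))
           * of_real (pochhammer (N + 2 * a + q / 2) (n j)))
        * Beta (of_real a + (of_real N + \<i> * of_real \<xi>) / 2 + of_real (q / 4))
               (of_real a + (of_real N - \<i> * of_real \<xi>) / 2 + of_real (q / 4))
        * cont_hahn (n j) (\<xi> / 2)
            (of_real (a + N / 2 + q / 4))
            (of_real (mu - a + (N + 1) / 2 + q / 4))
            (of_real (mu - a + (N + 1) / 2 + q / 4))
            (of_real (a + N / 2 + q / 4)))"
proof -
  define N where "N = real (tailsum r n (j + 1))"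
  define q where "q = real r - real j"
  have N: "N \<ge> 0" and q: "q \<ge> 0"
    using j by (auto simp: N_def q_def)
  define \<alpha> where "\<alpha> = complex_of_real a + (of_real N + \<i> * of_real \<xi>) / 2 + of_real (q / 4)"
  define \<beta> where "\<beta> = complex_of_real a + (of_real N - \<i> * of_real \<xi>) / 2 + of_real (q / 4)"
  define A where "A = complex_of_real (a + N / 2 + q / 4)"
  define B where "B = complex_of_real (mu - a + (N + 1) / 2 + q / 4)"
  define F where "F = hypergeom [- of_nat (n j), of_real (real (n j) + 2 * (N + mu + q / 2)), \<alpha>]
      [of_real (N + mu + (q + 1) / 2), of_real (N + 2 * a + q / 2)] 1"
  define P1 where "P1 = pochhammer (N + mu + (q + 1) / 2) (n j)"
  define P2 where "P2 = pochhammer (N + 2 * a + q / 2) (n j)"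
  have "P1 > 0" "P2 > 0"
    unfolding P1_def P2_def using N q mu a by (simp_all add: pochhammer_pos field_simps)
  have params: "A + B = of_real (N + mu + (q + 1) / 2)" "A + A = of_real (N + 2 * a + q / 2)"
    "of_nat (n j) + A + B + B + A - 1 = complex_of_real (real (n j) + 2 * (N + mu + q / 2))"
    "A + \<i> * of_real (\<xi> / 2) = \<alpha>"
    by (simp_all add: A_def B_def \<alpha>_def field_simps)
  have "cont_hahn (n j) (\<xi> / 2) A B B A = \<i> ^ (n j) * of_real P1 * of_real P2 / of_nat (fact (n j)) * F"
    unfolding cont_hahn_def params F_def P1_def P2_def pochhammer_of_real[symmetric] by simp
  moreover have "Theta r j a mu n \<xi> = Beta \<alpha> \<beta> * F"
    unfolding Theta_def Let_def F_def \<alpha>_def \<beta>_def N_def q_def ..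
  ultimately show ?thesis
    unfolding Let_def N_def[symmetric] q_def[symmetric] \<alpha>_def[symmetric] \<beta>_def[symmetric]
      A_def[symmetric] B_def[symmetric] P1_def[symmetric] P2_def[symmetric]
    using \<open>P1 > 0\<close> \<open>P2 > 0\<close> by (simp add: field_simps)
qed

lemma sum_factor_exponents:
  "(\<Sum>j=1..r. 2 * (a + (real r - real j) / 4 + real (tailsum r n (j + 1)) / 2) - 1) =
    2 * real r * a + real r * (real r - 5) / 4 + (\<Sum>j=1..r-1. real j * real (n (j + 1)))"
proof -
  have "(\<Sum>j=1..r. 2 * (a + (real r - real j) / 4 + real (tailsum r n (j + 1)) / 2) - 1) =
      (\<Sum>j=1..r. 2 * a + (real r - real j) / 2 + real (tailsum r n (j + 1)) - 1)"
    by (intro sum.cong refl) (simp add: field_simps)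
  also have "\<dots> = 2 * real r * a + (\<Sum>j=1..r. real r - real j) / 2
      + (\<Sum>j=1..r. real (tailsum r n (j + 1))) - real r"
    by (simp add: sum.distrib sum_subtractf flip: sum_divide_distrib)
  finally show ?thesis
    unfolding sum_real_minus_index sum_tailsum by (simp add: field_simps)
qed

theorem theorem3p2:
  fixes r :: nat and a mu :: real and n :: "nat \<Rightarrow> nat" and xi :: "nat \<Rightarrow> real"
  assumes "r \<ge> 1" and "a > 0" and "mu > - 1/2"
  shows "integrable (PiM {1..r} (\<lambda>_. lborel))
           (fourier_integrand r (\<lambda>x. of_real (f_r r n a mu x)) xi)
    \<and> fourier r (\<lambda>x. of_real (f_r r n a mu x)) xi =
      of_real (2 powr (2 * real r * a + real r * (real r - 5) / 4
                       + (\<Sum>j=1..r-1. real j * real (n (j+1)))))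
      * (\<Prod>j=1..r.
           of_real (pochhammer (2 * (real (tailsum r n (j+1)) + mu + (real r - real j) / 2)) (n j)
                    / fact (n j))
           * Theta r j a mu n (xi j))
    \<and> (\<forall>j\<in>{1..r}.
         Theta r j a mu n (xi j) =
           (let N = real (tailsum r n (j+1));
                q = real r - real j
            in of_nat (fact (n j))
               / (\<i> ^ (n j) * of_real (pochhammer (N + mu + (q + 1) / 2) (n j))
                  * of_real (pochhammer (N + 2 * a + q / 2) (n j)))
               * Beta (of_real a + (of_real N + \<i> * of_real (xi j)) / 2 + of_real (q / 4))
                      (of_real a + (of_real N - \<i> * of_real (xi j)) / 2 + of_real (q / 4))
               * cont_hahn (n j) (xi j / 2)
                   (of_real (a + N / 2 + q / 4))
                   (of_real (mu - a + (N + 1) / 2 + q / 4))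
                   (of_real (mu - a + (N + 1) / 2 + q / 4))
                   (of_real (a + N / 2 + q / 4))))"
proof -
  define g where "g j t = exp (- \<i> * of_real (xi j * t)) * of_real (f_r_factor r n a mu j t)" for j t
  define e where "e j = 2 * (a + (real r - real j) / 4 + real (tailsum r n (j + 1)) / 2) - 1" for j
  define c where "c j = of_real (pochhammer (2 * (real (tailsum r n (j + 1)) + mu + (real r - real j) / 2)) (n j)
      / fact (n j)) * Theta r j a mu n (xi j)" for j
  interpret lborel_product: product_sigma_finite "\<lambda>_::nat. lborel"
    by unfold_locales
  have integrand: "fourier_integrand r (\<lambda>x. of_real (f_r r n a mu x)) xi = (\<lambda>x. \<Prod>j\<in>{1..r}. g j (x j))"
    unfolding g_def by (rule ext) (rule fourier_integrand_f_r_eq_prod)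
  have g: "integrable lborel (g j)" "integral\<^sup>L lborel (g j) = of_real (2 powr e j) * c j"
    if "j \<in> {1..r}" for j
    using fourier_f_r_factor[OF assms(2), of j r] that unfolding g_def e_def c_def by auto
  have "fourier r (\<lambda>x. of_real (f_r r n a mu x)) xi = (\<Prod>j\<in>{1..r}. integral\<^sup>L lborel (g j))"
    unfolding fourier_def integrand by (rule lborel_product.product_integral_prod) (auto intro: g)
  also have "\<dots> = of_real (2 powr (\<Sum>j=1..r. e j)) * (\<Prod>j=1..r. c j)"
    using g(2) by (simp add: prod.distrib powr_sum)
  finally show ?thesis
    unfolding integrand e_def c_def sum_factor_exponents
    using lborel_product.product_integrable_prod[of "{1..r}" g] g(1) Theta_eq_cont_hahn assms
    by auto
qed

end
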